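(* Let $G$ be a cyclically $4$-edge-connected cubic graph with a distinguished edge $e$ that is not contained in any cyclic $4$-edge-cut of $G$. Suppose that for every cyclic $4$-edge-cut $E(A,B)$ of $G$ with $e$ an edge of $G[A]$, the set $B$ is not solid. Then for every such cut, $G[B]$ is a twisted net.
   Context: An edge-cut $E(A,B)$ is a $k$-edge-cut if it has exactly $k$ edges, cyclic if both $G[A]$ and $G[B]$ contain a cycle; $G$ is cyclically $4$-edge-connected if it has no cyclic edge-cut with fewer than four edges. For a cyclic $4$-edge-cut $E(A,B)$, $B$ is solid if there is no partition of $B$ into two parts, each with at least two vertices, joined by exactly two edges of $G[B]$. In a graph with all degrees $2$ or $3$, the degree-two vertices are corners; for a graph consisting of a single edge, both its ends are corners. Twisted nets are defined inductively: a $4$-cycle is a twisted net; if $T$ is a twisted net and $H$ is (disjoint from $T$) either a twisted net or a single edge, then the graph obtained from $T\cup H$ by adding edges $uv$ and $u'v'$, where $u\neq u'$ are corners of $T$ and $v\ne v'$ are corners of $H$, is a twisted net. *)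

theory Defs
  imports Main
begin

definition graph :: "'a set \<Rightarrow> 'a set set \<Rightarrow> bool" where
  "graph V E \<longleftrightarrow> finite V \<and> (\<forall>e\<in>E. \<exists>x y. x \<noteq> y \<and> x \<in> V \<and> y \<in> V \<and> e = {x, y})"

definition degree :: "'a set set \<Rightarrow> 'a \<Rightarrow> nat" where
  "degree E v = card {e\<in>E. v \<in> e}"

definition cubic :: "'a set \<Rightarrow> 'a set set \<Rightarrow> bool" where
  "cubic V E \<longleftrightarrow> graph V E \<and> (\<forall>v\<in>V. degree E v = 3)"

definition induced_edges :: "'a set set \<Rightarrow> 'a set \<Rightarrow> 'a set set" where
  "induced_edges E A = {e\<in>E. e \<subseteq> A}"

definition has_cycle :: "'a set \<Rightarrow> 'a set set \<Rightarrow> bool" where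
  "has_cycle V E \<longleftrightarrow> (\<exists>xs. length xs \<ge> 3 \<and> distinct xs \<and> set xs \<subseteq> V \<and>
      (\<forall>i < length xs - 1. {xs ! i, xs ! Suc i} \<in> E) \<and> {last xs, hd xs} \<in> E)"

definition cut_edges :: "'a set set \<Rightarrow> 'a set \<Rightarrow> 'a set \<Rightarrow> 'a set set" where
  "cut_edges E A B = {e\<in>E. e \<inter> A \<noteq> {} \<and> e \<inter> B \<noteq> {}}"

definition is_partition :: "'a set \<Rightarrow> 'a set \<Rightarrow> 'a set \<Rightarrow> bool" where
  "is_partition V A B \<longleftrightarrow> A \<union> B = V \<and> A \<inter> B = {}"

definition cyclic_cut :: "'a set \<Rightarrow> 'a set set \<Rightarrow> 'a set \<Rightarrow> 'a set \<Rightarrow> bool" where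
  "cyclic_cut V E A B \<longleftrightarrow> is_partition V A B \<and>
     has_cycle A (induced_edges E A) \<and> has_cycle B (induced_edges E B)"

definition cyclic_k_cut :: "nat \<Rightarrow> 'a set \<Rightarrow> 'a set set \<Rightarrow> 'a set \<Rightarrow> 'a set \<Rightarrow> bool" where
  "cyclic_k_cut k V E A B \<longleftrightarrow> cyclic_cut V E A B \<and> card (cut_edges E A B) = k"

definition cyclically_4_edge_connected :: "'a set \<Rightarrow> 'a set set \<Rightarrow> bool" where
  "cyclically_4_edge_connected V E \<longleftrightarrow>
     (\<forall>A B. cyclic_cut V E A B \<longrightarrow> card (cut_edges E A B) \<ge> 4)"

definition solid :: "'a set set \<Rightarrow> 'a set \<Rightarrow> bool" where
  "solid E B \<longleftrightarrow> \<not> (\<exists>B1 B2. is_partition B B1 B2 \<and> card B1 \<ge> 2 \<and> card B2 \<ge> 2 \<and>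
       card (cut_edges (induced_edges E B) B1 B2) = 2)"

definition corners :: "'a set \<Rightarrow> 'a set set \<Rightarrow> 'a set" where
  "corners V E = {v\<in>V. degree E v = 2}"

definition is_4cycle :: "'a set \<Rightarrow> 'a set set \<Rightarrow> bool" where
  "is_4cycle V E \<longleftrightarrow> (\<exists>a b c d. distinct [a, b, c, d] \<and> V = {a, b, c, d} \<and>
      E = {{a, b}, {b, c}, {c, d}, {d, a}})"

definition is_single_edge :: "'a set \<Rightarrow> 'a set set \<Rightarrow> bool" where
  "is_single_edge V E \<longleftrightarrow> (\<exists>x y. x \<noteq> y \<and> V = {x, y} \<and> E = {{x, y}})"

inductive twisted_net :: "'a set \<Rightarrow> 'a set set \<Rightarrow> bool" where
  base: "is_4cycle V E \<Longrightarrow> twisted_net V E"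
| step_net: "\<lbrakk> twisted_net VT ET; twisted_net VH EH; VT \<inter> VH = {};
      u \<in> corners VT ET; u' \<in> corners VT ET; u \<noteq> u';
      v \<in> corners VH EH; v' \<in> corners VH EH; v \<noteq> v' \<rbrakk>
    \<Longrightarrow> twisted_net (VT \<union> VH) (ET \<union> EH \<union> {{u, v}, {u', v'}})"
| step_edge: "\<lbrakk> twisted_net VT ET; is_single_edge VH EH; VT \<inter> VH = {};
      u \<in> corners VT ET; u' \<in> corners VT ET; u \<noteq> u';
      v \<in> VH; v' \<in> VH; v \<noteq> v' \<rbrakk>
    \<Longrightarrow> twisted_net (VT \<union> VH) (ET \<union> EH \<union> {{u, v}, {u', v'}})"

end

theory Submission
  imports Defs
begin

(* Let E(A,B) be a cyclic 4-edge-cut with e in G[A].  We argue by induction on |B|.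
   Since B is not solid, B splits into B1, B2 (each with at least two vertices) joined by exactly
   two edges of G[B].  Counting degrees in the cubic graph gives 3|X| = 2|E(X)| + |d(X)| for every
   vertex set X, where d(X) is the set of edges leaving X.  Together with cyclic 4-edge-connectivity
   (and the fact that an acyclic X has |d(X)| >= |X| + 2) this forces |d(B1)| = |d(B2)| = 4, the two
   connecting edges uv, u'v' to have u <> u' and v <> v', and each part Bi either to carry a cycle
   (then E(V - Bi, Bi) is a smaller cyclic 4-edge-cut, G[Bi] is a twisted net by induction and the
   ends of the connecting edges are corners) or to be a single edge.  Gluing the two parts along
   uv and u'v' is exactly one step of the inductive definition of twisted nets. *)

section \<open>Cycles in finite graphs\<close>

lemma has_cycle_mono:
  assumes "has_cycle S F" "S \<subseteq> S'" "F \<subseteq> F'"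
  shows "has_cycle S' F'"
  using assms unfolding has_cycle_def by blast

lemma has_cycle_card:
  assumes "has_cycle S F" "finite S"
  shows "card S \<ge> 3"
proof -
  from assms obtain xs where "length xs \<ge> 3" "distinct xs" "set xs \<subseteq> S"
    unfolding has_cycle_def by blast
  then show ?thesis using card_mono[OF assms(2)] distinct_card by (metis order_trans)
qed

definition is_path :: "'a set set \<Rightarrow> 'a set \<Rightarrow> 'a list \<Rightarrow> bool" where
  "is_path F S xs \<longleftrightarrow> xs \<noteq> [] \<and> distinct xs \<and> set xs \<subseteq> S \<and>
     (\<forall>i < length xs - 1. {xs ! i, xs ! Suc i} \<in> F)"

lemma path_length_le_card: "finite S \<Longrightarrow> is_path F S xs \<Longrightarrow> length xs \<le> card S"
  unfolding is_path_def by (metis distinct_card card_mono)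

lemma path_extend:
  assumes xs: "is_path F S xs" and y: "y \<in> S" "y \<notin> set xs" "{y, hd xs} \<in> F"
  shows "is_path F S (y # xs)"
  unfolding is_path_def
proof (intro conjI allI impI)
  have ne: "xs \<noteq> []" and e: "\<forall>i < length xs - 1. {xs ! i, xs ! Suc i} \<in> F"
    using xs by (auto simp: is_path_def)
  show "distinct (y # xs)" "set (y # xs) \<subseteq> S" using xs y by (auto simp: is_path_def)
  fix i assume i: "i < length (y # xs) - 1"
  show "{(y # xs) ! i, (y # xs) ! Suc i} \<in> F"
  proof (cases i)
    case 0
    then show ?thesis using y ne by (simp add: hd_conv_nth)
  next
    case (Suc k)
    then show ?thesis using e i by simp
  qed
qed simp

lemma path_chord_cycle:
  assumes xs: "is_path F S xs" and j: "2 \<le> j" "j < length xs" and chord: "{xs ! j, hd xs} \<in> F"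
  shows "has_cycle S F"
  unfolding has_cycle_def
proof (intro exI conjI)
  let ?ys = "take (Suc j) xs"
  have len: "length ?ys = Suc j" using j by simp
  show "3 \<le> length ?ys" "distinct ?ys" "set ?ys \<subseteq> S"
    using len j xs set_take_subset[of "Suc j" xs] by (auto simp: is_path_def)
  show "\<forall>i<length ?ys - 1. {?ys ! i, ?ys ! Suc i} \<in> F"
    using xs j by (auto simp: is_path_def)
  have "?ys = take j xs @ [xs ! j]" using j by (simp add: take_Suc_conv_app_nth)
  then have "last ?ys = xs ! j" by simp
  moreover have "hd ?ys = hd xs" using j by (simp add: hd_take)
  ultimately show "{last ?ys, hd ?ys} \<in> F" using chord by simp
qed

lemma degree_le_neighbours:
  assumes fin: "finite S" and edges: "\<forall>e\<in>F. \<exists>x y. x \<noteq> y \<and> x \<in> S \<and> y \<in> S \<and> e = {x, y}"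
  shows "degree F x \<le> card {y\<in>S. {x, y} \<in> F}"
proof -
  let ?N = "{y\<in>S. {x, y} \<in> F}"
  have "{e\<in>F. x \<in> e} \<subseteq> (\<lambda>y. {x, y}) ` ?N"
    using edges by (fastforce simp: insert_commute)
  then have "degree F x \<le> card ((\<lambda>y. {x, y}) ` ?N)"
    unfolding degree_def using fin by (simp add: card_mono)
  also have "\<dots> \<le> card ?N" using fin by (simp add: card_image_le)
  finally show ?thesis .
qed

text \<open>Minimum degree two forces a cycle: the head of a longest path has a second neighbour on
  the path, which closes a cycle.\<close>
lemma mindeg_cycle:
  assumes fin: "finite S" and ne: "S \<noteq> {}"
    and edges: "\<forall>e\<in>F. \<exists>x y. x \<noteq> y \<and> x \<in> S \<and> y \<in> S \<and> e = {x, y}"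
    and deg: "\<forall>v\<in>S. degree F v \<ge> 2"
  shows "has_cycle S F"
proof -
  obtain v where v: "v \<in> S" using ne by blast
  have "is_path F S [v]" using v by (simp add: is_path_def)
  then obtain xs where xs: "is_path F S xs"
    and longest: "\<forall>ys. is_path F S ys \<longrightarrow> length ys \<le> length xs"
    using ex_has_greatest_nat[of "is_path F S" "[v]" length "Suc (card S)"]
      path_length_le_card[OF fin] by (metis le_imp_less_Suc)
  define x where "x = hd xs"
  define N where "N = {y\<in>S. {x, y} \<in> F}"
  have x0: "xs ! 0 = x" and xS: "x \<in> S"
    using xs by (auto simp: is_path_def x_def hd_conv_nth)
  have "2 \<le> card N"
    using deg xS degree_le_neighbours[OF fin edges, of x] by (fastforce simp: N_def)
  then obtain y where yN: "y \<in> N" and y1: "y \<noteq> xs ! 1"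
    by (metis (no_types, lifting) card_le_Suc0_iff_eq fin N_def finite_subset
        mem_Collect_eq not_less_eq_eq numeral_2_eq_2 subsetI One_nat_def)
  have xN: "x \<notin> N" using edges by (fastforce simp: N_def doubleton_eq_iff)
  have "y \<in> set xs"
  proof (rule ccontr)
    assume "y \<notin> set xs"
    then have "is_path F S (y # xs)"
      using path_extend[OF xs] yN by (auto simp: N_def x_def insert_commute)
    then show False using longest by fastforce
  qed
  then obtain j where j: "j < length xs" "xs ! j = y" by (metis in_set_conv_nth)
  have "j \<noteq> 0" using j x0 xN yN by metis
  moreover have "j \<noteq> 1" using j y1 by auto
  ultimately have "2 \<le> j" by simp
  moreover have "{xs ! j, hd xs} \<in> F" using j yN by (simp add: N_def x_def insert_commute)
  ultimately show ?thesis using path_chord_cycle[OF xs _ j(1)] by blast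
qed

text \<open>A forest has fewer edges than vertices: at least as many edges as vertices force a cycle.
  Vertices of degree at most one are deleted until minimum degree two is reached.\<close>
lemma many_edges_cycle:
  "finite S \<Longrightarrow> S \<noteq> {} \<Longrightarrow> (\<forall>e\<in>F. \<exists>x y. x \<noteq> y \<and> x \<in> S \<and> y \<in> S \<and> e = {x, y})
   \<Longrightarrow> card F \<ge> card S \<Longrightarrow> has_cycle S F"
proof (induction "card S" arbitrary: S F rule: less_induct)
  case less
  note fin = less.prems(1) and ne = less.prems(2) and edges = less.prems(3) and cF = less.prems(4)
  have "F \<subseteq> Pow S" using edges by auto
  then have finF: "finite F" using fin finite_subset by blast
  show ?case
  proof (cases "\<forall>v\<in>S. degree F v \<ge> 2")
    case True then show ?thesis using mindeg_cycle fin ne edges by blast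
  next
    case False
    then obtain v where v: "v \<in> S" "degree F v \<le> 1" by force
    define S' where "S' = S - {v}"
    define F' where "F' = {e\<in>F. v \<notin> e}"
    have "F = F' \<union> {e\<in>F. v \<in> e}" "F' \<inter> {e\<in>F. v \<in> e} = {}" by (auto simp: F'_def)
    then have "card F = card F' + degree F v"
      unfolding degree_def using finF by (metis card_Un_disjoint finite_Un)
    then have cF': "card F' \<ge> card S'" using cF v fin by (simp add: S'_def)
    have edges': "\<forall>e\<in>F'. \<exists>x y. x \<noteq> y \<and> x \<in> S' \<and> y \<in> S' \<and> e = {x, y}"
      using edges by (fastforce simp: F'_def S'_def)
    have ne': "S' \<noteq> {}"
    proof
      assume "S' = {}"
      then have "S = {v}" using v by (auto simp: S'_def)
      then have "F = {}" using edges by fastforce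
      then show False using cF \<open>S = {v}\<close> by simp
    qed
    have "card S' < card S" unfolding S'_def by (rule card_Diff1_less[OF fin v(1)])
    then have "has_cycle S' F'" using less.hyps fin ne' edges' cF' by (simp add: S'_def)
    then show ?thesis by (rule has_cycle_mono) (auto simp: S'_def F'_def)
  qed
qed

lemma cut_edges_sym: "cut_edges F X Y = cut_edges F Y X"
  unfolding cut_edges_def by blast

lemma induced_edges_partition:
  assumes "is_partition B B1 B2"
  shows "induced_edges F B = induced_edges F B1 \<union> induced_edges F B2 \<union> cut_edges (induced_edges F B) B1 B2"
  using assms unfolding is_partition_def induced_edges_def cut_edges_def by blast

section \<open>Gluing twisted nets\<close>

text \<open>A piece that can be attached at the vertices u, u' in the inductive step of twisted nets:
  a twisted net with corners u, u', or a single edge with ends u, u'.\<close>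
definition net_piece :: "'a set \<Rightarrow> 'a set set \<Rightarrow> 'a \<Rightarrow> 'a \<Rightarrow> bool" where
  "net_piece X F u u' \<longleftrightarrow> u \<noteq> u' \<and>
     ((twisted_net X F \<and> u \<in> corners X F \<and> u' \<in> corners X F) \<or> (is_single_edge X F \<and> u \<in> X \<and> u' \<in> X))"

lemma single_edge_piece:
  assumes "is_single_edge X F" "u \<in> X" "u' \<in> X" "u \<noteq> u'"
  shows "X = {u, u'}" "F = {{u, u'}}"
  using assms unfolding is_single_edge_def by (auto simp: doubleton_eq_iff)

text \<open>Two disjoint pieces joined by the edges uv and u'v' form a twisted net; two single edges
  give the base 4-cycle.\<close>
lemma glue_pieces:
  assumes P: "net_piece X F u u'" and Q: "net_piece Y H v v'" and XY: "X \<inter> Y = {}"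
  shows "twisted_net (X \<union> Y) (F \<union> H \<union> {{u, v}, {u', v'}})"
proof -
  have uu: "u \<noteq> u'" and vv: "v \<noteq> v'" using P Q by (auto simp: net_piece_def)
  consider (net_net) "twisted_net X F" "u \<in> corners X F" "u' \<in> corners X F"
           "twisted_net Y H" "v \<in> corners Y H" "v' \<in> corners Y H"
    | (net_edge) "twisted_net X F" "u \<in> corners X F" "u' \<in> corners X F"
           "is_single_edge Y H" "v \<in> Y" "v' \<in> Y"
    | (edge_net) "is_single_edge X F" "u \<in> X" "u' \<in> X"
           "twisted_net Y H" "v \<in> corners Y H" "v' \<in> corners Y H"
    | (edge_edge) "is_single_edge X F" "u \<in> X" "u' \<in> X" "is_single_edge Y H" "v \<in> Y" "v' \<in> Y"
    using P Q unfolding net_piece_def by blast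
  then show ?thesis
  proof cases
    case net_net
    show ?thesis by (rule twisted_net.step_net[OF net_net(1,4) XY net_net(2,3) uu net_net(5,6) vv])
  next
    case net_edge
    show ?thesis by (rule twisted_net.step_edge[OF net_edge(1,4) XY net_edge(2,3) uu net_edge(5,6) vv])
  next
    case edge_net
    have "twisted_net (Y \<union> X) (H \<union> F \<union> {{v, u}, {v', u'}})"
      using twisted_net.step_edge[OF edge_net(4,1) _ edge_net(5,6) vv edge_net(2,3) uu] XY
      by (simp add: Int_commute)
    moreover have "Y \<union> X = X \<union> Y" "H \<union> F \<union> {{v, u}, {v', u'}} = F \<union> H \<union> {{u, v}, {u', v'}}"
      by (auto simp: insert_commute)
    ultimately show ?thesis by simp
  next
    case edge_edge
    have X: "X = {u, u'}" "F = {{u, u'}}" using single_edge_piece edge_edge uu by metis+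
    have Y: "Y = {v, v'}" "H = {{v, v'}}" using single_edge_piece edge_edge vv by metis+
    have "is_4cycle (X \<union> Y) (F \<union> H \<union> {{u, v}, {u', v'}})"
      unfolding is_4cycle_def
    proof (intro exI conjI)
      show "distinct [u, u', v', v]" using uu vv XY X Y by auto
      show "X \<union> Y = {u, u', v', v}" using X Y by auto
      show "F \<union> H \<union> {{u, v}, {u', v'}} = {{u, u'}, {u', v'}, {v', v}, {v, u}}"
        using X Y by (auto simp: insert_commute)
    qed
    then show ?thesis by (rule twisted_net.base)
  qed
qed

section \<open>Boundaries in cyclically 4-edge-connected cubic graphs\<close>

locale cyc4_cubic =
  fixes V :: "'a set" and E :: "'a set set"
  assumes cub: "cubic V E" and c4: "cyclically_4_edge_connected V E"
begin

definition out :: "'a set \<Rightarrow> 'a set set" where "out X = cut_edges E X (V - X)"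

lemma finV: "finite V" using cub by (simp add: cubic_def graph_def)

lemma edgeE: "e \<in> E \<Longrightarrow> \<exists>x y. x \<noteq> y \<and> x \<in> V \<and> y \<in> V \<and> e = {x, y}"
  using cub by (simp add: cubic_def graph_def)

lemma finE: "finite E"
proof -
  have "E \<subseteq> Pow V" using edgeE by blast
  then show ?thesis using finV finite_subset by blast
qed

lemma deg3: "v \<in> V \<Longrightarrow> degree E v = 3" using cub by (simp add: cubic_def)

lemma out_alt: "out X = {e\<in>E. e \<inter> X \<noteq> {} \<and> \<not> e \<subseteq> X}"
  unfolding out_def cut_edges_def using edgeE by blast

lemma finite_out_at: "finite {e\<in>out X. u \<in> e}"
  using finE by (simp add: out_alt)

lemma finite_induced: "finite (induced_edges E X)"
  using finE by (simp add: induced_edges_def)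

lemma induced_edges_graph:
  "X \<subseteq> V \<Longrightarrow> \<forall>e\<in>induced_edges E X. \<exists>x y. x \<noteq> y \<and> x \<in> X \<and> y \<in> X \<and> e = {x, y}"
  unfolding induced_edges_def using edgeE by fastforce

lemma count:
  assumes XV: "X \<subseteq> V"
  shows "3 * card X = 2 * card (induced_edges E X) + card (out X)"
proof -
  have finX: "finite X" using XV finV finite_subset by blast
  have "3 * card X = (\<Sum>v\<in>X. degree E v)" using deg3 XV by (simp add: subset_iff)
  also have "\<dots> = (\<Sum>v\<in>X. \<Sum>e\<in>E. if v \<in> e then (1::nat) else 0)"
    unfolding degree_def using sum.inter_filter[OF finE, of "\<lambda>_. 1::nat"] by simp
  also have "\<dots> = (\<Sum>e\<in>E. \<Sum>v\<in>X. if v \<in> e then (1::nat) else 0)" by (rule sum.swap)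
  also have "\<dots> = (\<Sum>e\<in>E. (if e \<subseteq> X then (2::nat) else 0) + (if e \<in> out X then (1::nat) else 0))"
  proof (rule sum.cong[OF refl])
    fix e assume eE: "e \<in> E"
    then obtain x y where xy: "x \<noteq> y" "e = {x, y}" using edgeE by blast
    have "(\<Sum>v\<in>X. if v \<in> e then (1::nat) else 0) = card {v\<in>X. v \<in> e}"
      using sum.inter_filter[OF finX, of "\<lambda>_. 1::nat"] by simp
    also have "{v\<in>X. v \<in> e} = X \<inter> {x, y}" using xy by auto
    finally have "(\<Sum>v\<in>X. if v \<in> e then (1::nat) else 0) = card (X \<inter> {x, y})" .
    then show "(\<Sum>v\<in>X. if v \<in> e then (1::nat) else 0) =
       (if e \<subseteq> X then (2::nat) else 0) + (if e \<in> out X then (1::nat) else 0)"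
      using xy eE by (cases "x \<in> X"; cases "y \<in> X") (auto simp: out_alt)
  qed
  also have "\<dots> = (\<Sum>e\<in>E. if e \<subseteq> X then (2::nat) else 0) + (\<Sum>e\<in>E. if e \<in> out X then (1::nat) else 0)"
    by (rule sum.distrib)
  also have "(\<Sum>e\<in>E. if e \<subseteq> X then (2::nat) else 0) = 2 * card (induced_edges E X)"
    unfolding induced_edges_def using sum.inter_filter[OF finE, of "\<lambda>_. 2::nat" "\<lambda>e. e \<subseteq> X"] by simp
  also have "(\<Sum>e\<in>E. if e \<in> out X then (1::nat) else 0) = card (out X)"
  proof -
    have "out X = {e\<in>E. e \<in> out X}" using out_alt by auto
    then show ?thesis using sum.inter_filter[OF finE, of "\<lambda>_. 1::nat" "\<lambda>e. e \<in> out X"] by simp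
  qed
  finally show ?thesis .
qed

lemma deg_split:
  assumes XV: "X \<subseteq> V" and uX: "u \<in> X"
  shows "3 = degree (induced_edges E X) u + card {e\<in>out X. u \<in> e}"
proof -
  have "{e\<in>E. u \<in> e} = {e\<in>induced_edges E X. u \<in> e} \<union> {e\<in>out X. u \<in> e}"
       "{e\<in>induced_edges E X. u \<in> e} \<inter> {e\<in>out X. u \<in> e} = {}"
    using uX by (auto simp: induced_edges_def out_alt)
  then have "card {e\<in>E. u \<in> e} = card {e\<in>induced_edges E X. u \<in> e} + card {e\<in>out X. u \<in> e}"
    using finE card_Un_disjoint[of "{e\<in>induced_edges E X. u \<in> e}" "{e\<in>out X. u \<in> e}"]
      finite_induced finite_out_at by simp
  then show ?thesis using deg3 XV uX unfolding degree_def by auto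
qed

text \<open>An acyclic vertex set is a forest, hence has a large boundary.\<close>
lemma acyclic_out:
  assumes XV: "X \<subseteq> V" and ne: "X \<noteq> {}" and nc: "\<not> has_cycle X (induced_edges E X)"
  shows "card (out X) \<ge> card X + 2"
proof -
  have finX: "finite X" using XV finV finite_subset by blast
  have "card (induced_edges E X) < card X"
    using many_edges_cycle[OF finX ne induced_edges_graph[OF XV]] nc by force
  then show ?thesis using count[OF XV] by simp
qed

lemma out_ge_4:
  assumes XV: "X \<subseteq> V" and cX: "card X \<ge> 2" and cyc: "has_cycle (V - X) (induced_edges E (V - X))"
  shows "card (out X) \<ge> 4"
proof (cases "has_cycle X (induced_edges E X)")
  case True
  then show ?thesis
    using c4 cyc XV unfolding cyclically_4_edge_connected_def cyclic_cut_def is_partition_def out_def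
    by (metis Diff_disjoint Diff_partition)
next
  case False
  then show ?thesis using acyclic_out[OF XV _ False] cX by fastforce
qed

text \<open>If |d(X)| = 4, the complement is cyclic and |X| >= 3, every vertex of X sends at most one
  edge out of X: otherwise deleting it would leave a set with boundary at most three.\<close>
lemma one_out:
  assumes XV: "X \<subseteq> V" and o4: "card (out X) = 4" and cyc: "has_cycle (V - X) (induced_edges E (V - X))"
    and c3: "card X \<ge> 3" and uX: "u \<in> X"
  shows "card {e\<in>out X. u \<in> e} \<le> 1"
proof (rule ccontr)
  assume two: "\<not> card {e\<in>out X. u \<in> e} \<le> 1"
  define X' where "X' = X - {u}"
  have X'V: "X' \<subseteq> V" using XV by (auto simp: X'_def)
  have cX': "card X' = card X - 1"
    using uX XV finV by (simp add: X'_def finite_subset)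
  have "induced_edges E X = induced_edges E X' \<union> {e\<in>induced_edges E X. u \<in> e}"
       "induced_edges E X' \<inter> {e\<in>induced_edges E X. u \<in> e} = {}"
    by (auto simp: induced_edges_def X'_def)
  then have "card (induced_edges E X) = card (induced_edges E X') + degree (induced_edges E X) u"
    unfolding degree_def using finite_induced
    by (metis (no_types, lifting) card_Un_disjoint finite_Un)
  then have "card (out X') \<le> 3"
    using deg_split[OF XV uX] count[OF XV] count[OF X'V] o4 two cX' c3 by linarith
  moreover have "has_cycle (V - X') (induced_edges E (V - X'))"
    by (rule has_cycle_mono[OF cyc]) (auto simp: X'_def induced_edges_def)
  moreover have "card X' \<ge> 2" using cX' c3 by linarith
  ultimately show False using out_ge_4[OF X'V] by fastforce
qed

lemma corner:
  assumes XV: "X \<subseteq> V" and o4: "card (out X) = 4" and cyc: "has_cycle (V - X) (induced_edges E (V - X))"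
    and c3: "card X \<ge> 3" and uX: "u \<in> X" and c: "c \<in> out X" "u \<in> c"
  shows "u \<in> corners X (induced_edges E X)"
proof -
  have "{e\<in>out X. u \<in> e} \<noteq> {}" using c by blast
  then have "card {e\<in>out X. u \<in> e} \<noteq> 0" using finite_out_at by simp
  then show ?thesis
    using one_out[OF XV o4 cyc c3 uX] deg_split[OF XV uX] uX unfolding corners_def by simp
qed

lemma single_side:
  assumes XV: "X \<subseteq> V" and o4: "card (out X) = 4" and c2: "card X \<ge> 2"
    and nc: "\<not> has_cycle X (induced_edges E X)"
  shows "is_single_edge X (induced_edges E X)"
proof -
  have finX: "finite X" using XV finV finite_subset by blast
  have cX: "card X = 2" using acyclic_out[OF XV _ nc] o4 c2 by fastforce
  have "card (induced_edges E X) = 1" using count[OF XV] cX o4 by simp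
  then obtain f where f: "induced_edges E X = {f}" using card_1_singletonE by blast
  then obtain a b where ab: "a \<noteq> b" "a \<in> X" "b \<in> X" "f = {a, b}"
    using induced_edges_graph[OF XV] by blast
  have "{a, b} \<subseteq> X" "card {a, b} = 2" using ab by auto
  then have "X = {a, b}" using cX finX by (metis card_subset_eq)
  then show ?thesis using ab f unfolding is_single_edge_def by blast
qed

lemma no_double_end:
  assumes BV: "B \<subseteq> V" and oB: "card (out B) = 4" and cycB: "has_cycle (V - B) (induced_edges E (V - B))"
    and c4B: "card B \<ge> 4" and XB: "X \<subseteq> B" and oX: "card (out X) = 4" and c2X: "card X \<ge> 2"
    and uX: "u \<in> X" and edges: "{u, v} \<in> out X" "{u, v'} \<in> out X" "v \<noteq> v'"
    and rest: "out X \<subseteq> out B \<union> {{u, v}, {u, v'}}"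
  shows False
proof -
  have XV: "X \<subseteq> V" using XB BV by auto
  have cycX: "has_cycle (V - X) (induced_edges E (V - X))"
    by (rule has_cycle_mono[OF cycB]) (use XB in \<open>auto simp: induced_edges_def\<close>)
  have "card {{u, v}, {u, v'}} = 2" using edges(3) by (simp add: doubleton_eq_iff)
  then have ge2: "card {e\<in>out X. u \<in> e} \<ge> 2"
    using card_mono[OF finite_out_at, of "{{u, v}, {u, v'}}"] edges by auto
  show False
  proof (cases "card X \<ge> 3")
    case True
    then show False using one_out[OF XV oX cycX True uX] ge2 by simp
  next
    case False
    then have "card X = 2" using c2X by simp
    then have "card (X - {u}) = 1" using uX by simp
    then obtain w where "X - {u} = {w}" using card_1_singletonE by blast
    then have w: "w \<in> X" "w \<noteq> u" "X = {u, w}" using uX by auto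
    have vX: "v \<notin> X" "v' \<notin> X" using edges uX by (auto simp: out_alt)
    have "{e\<in>induced_edges E X. w \<in> e} \<subseteq> {{u, w}}"
      using induced_edges_graph[OF XV] w by fastforce
    then have "degree (induced_edges E X) w \<le> 1"
      unfolding degree_def using card_mono[of "{{u, w}}"] by fastforce
    then have "card {e\<in>out X. w \<in> e} \<ge> 2" using deg_split[OF XV w(1)] by simp
    moreover have "{e\<in>out X. w \<in> e} \<subseteq> {e\<in>out B. w \<in> e}"
    proof
      fix f assume f: "f \<in> {e\<in>out X. w \<in> e}"
      have "w \<notin> {u, v}" "w \<notin> {u, v'}" using w vX by auto
      then have "f \<noteq> {u, v}" "f \<noteq> {u, v'}" using f by auto
      then show "f \<in> {e\<in>out B. w \<in> e}" using rest f by auto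
    qed
    ultimately have "card {e\<in>out B. w \<in> e} \<ge> 2"
      using card_mono[OF finite_out_at] by (meson le_trans)
    moreover have "card {e\<in>out B. w \<in> e} \<le> 1"
      using one_out[OF BV oB cycB _ ] c4B XB w by auto
    ultimately show False by simp
  qed
qed

section \<open>Splitting a non-solid side\<close>

text \<open>Boundary bookkeeping for a partition of B: the edges crossing the partition are counted
  once in each part.\<close>
lemma out_partition_count:
  assumes BV: "B \<subseteq> V" and p: "is_partition B B1 B2"
  shows "card (out B1) + card (out B2) = card (out B) + 2 * card (cut_edges (induced_edges E B) B1 B2)"
proof -
  let ?C = "cut_edges (induced_edges E B) B1 B2"
  have BU: "B = B1 \<union> B2" and BI: "B1 \<inter> B2 = {}" using p by (auto simp: is_partition_def)
  have B1V: "B1 \<subseteq> V" and B2V: "B2 \<subseteq> V" using BU BV by auto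
  have cB: "card B = card B1 + card B2"
    using BU BI BV finV by (metis card_Un_disjoint finite_Un finite_subset)
  have d1: "induced_edges E B1 \<inter> induced_edges E B2 = {}"
    using BI edgeE unfolding induced_edges_def by fastforce
  have d2: "(induced_edges E B1 \<union> induced_edges E B2) \<inter> ?C = {}"
    unfolding cut_edges_def induced_edges_def using BI by blast
  have "card (induced_edges E B) = card (induced_edges E B1) + card (induced_edges E B2) + card ?C"
    using induced_edges_partition[OF p, of E] d1 d2 finite_induced
    by (metis card_Un_disjoint finite_Un)
  then show ?thesis using count[OF BV] count[OF B1V] count[OF B2V] cB by linarith
qed

lemma crossing_edges_out:
  assumes BV: "B \<subseteq> V" and p: "is_partition B B1 B2"
  shows "cut_edges (induced_edges E B) B1 B2 \<subseteq> out B1"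
    and "out B1 \<subseteq> out B \<union> cut_edges (induced_edges E B) B1 B2"
  using p unfolding is_partition_def cut_edges_def induced_edges_def out_alt by blast+

lemma crossing_edge_ends:
  assumes p: "is_partition B B1 B2" and c: "c \<in> cut_edges (induced_edges E B) B1 B2"
  shows "\<exists>u v. u \<in> B1 \<and> v \<in> B2 \<and> c = {u, v}"
proof -
  have "c \<in> E" "c \<inter> B1 \<noteq> {}" "c \<inter> B2 \<noteq> {}"
    using c unfolding cut_edges_def induced_edges_def by auto
  moreover have "B1 \<inter> B2 = {}" using p by (simp add: is_partition_def)
  ultimately show ?thesis using edgeE by (fastforce simp: insert_commute)
qed

lemma nonsolid_split:
  assumes BV: "B \<subseteq> V" and oB: "card (out B) = 4" and cycB: "has_cycle (V - B) (induced_edges E (V - B))"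
    and p: "is_partition B B1 B2" and cB1: "card B1 \<ge> 2" and cB2: "card B2 \<ge> 2"
    and cC: "card (cut_edges (induced_edges E B) B1 B2) = 2"
  obtains u u' v v' where "card (out B1) = 4" "card (out B2) = 4"
    "u \<in> B1" "u' \<in> B1" "v \<in> B2" "v' \<in> B2" "u \<noteq> u'" "v \<noteq> v'"
    "cut_edges (induced_edges E B) B1 B2 = {{u, v}, {u', v'}}"
proof -
  let ?C = "cut_edges (induced_edges E B) B1 B2"
  have p': "is_partition B B2 B1" using p by (auto simp: is_partition_def)
  have BU: "B = B1 \<union> B2" and BI: "B1 \<inter> B2 = {}" using p by (auto simp: is_partition_def)
  have B1V: "B1 \<subseteq> V" and B2V: "B2 \<subseteq> V" using BU BV by auto
  have cyc: "has_cycle (V - X) (induced_edges E (V - X))" if "X \<subseteq> B" for X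
    by (rule has_cycle_mono[OF cycB]) (use that in \<open>auto simp: induced_edges_def\<close>)
  have "card (out B1) + card (out B2) = 8" using out_partition_count[OF BV p] oB cC by simp
  moreover have "card (out B1) \<ge> 4" using out_ge_4[OF B1V cB1 cyc] BU by blast
  moreover have "card (out B2) \<ge> 4" using out_ge_4[OF B2V cB2 cyc] BU by blast
  ultimately have o1: "card (out B1) = 4" and o2: "card (out B2) = 4" by linarith+
  obtain c1 c2 where C12: "?C = {c1, c2}" "c1 \<noteq> c2" using cC by (meson card_2_iff)
  obtain u v where uv: "u \<in> B1" "v \<in> B2" "c1 = {u, v}" using crossing_edge_ends[OF p] C12 by blast
  obtain u' v' where uv': "u' \<in> B1" "v' \<in> B2" "c2 = {u', v'}" using crossing_edge_ends[OF p] C12 by blast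
  have "finite B1" "finite B2" using B1V B2V finV finite_subset by auto
  then have "card B = card B1 + card B2" using BU BI by (simp add: card_Un_disjoint)
  then have c4B: "card B \<ge> 4" using cB1 cB2 by linarith
  have uu: "u \<noteq> u'"
  proof
    assume "u = u'"
    then have C: "?C = {{u, v}, {u, v'}}" and "v \<noteq> v'" using C12 uv uv' by auto
    then have e: "{u, v} \<in> out B1" "{u, v'} \<in> out B1" "v \<noteq> v'"
        "out B1 \<subseteq> out B \<union> {{u, v}, {u, v'}}"
      using crossing_edges_out[OF BV p] unfolding C by auto
    show False by (rule no_double_end[OF BV oB cycB c4B _ o1 cB1 uv(1) e]) (use BU in blast)
  qed
  have vv: "v \<noteq> v'"
  proof
    assume "v = v'"
    then have C: "?C = {{v, u}, {v, u'}}" and "u \<noteq> u'" using C12 uv uv' by (auto simp: insert_commute)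
    then have e: "{v, u} \<in> out B2" "{v, u'} \<in> out B2" "u \<noteq> u'"
        "out B2 \<subseteq> out B \<union> {{v, u}, {v, u'}}"
      using crossing_edges_out[OF BV p'] unfolding cut_edges_sym[of _ B2 B1] C by auto
    show False by (rule no_double_end[OF BV oB cycB c4B _ o2 cB2 uv(2) e]) (use BU in blast)
  qed
  show ?thesis by (rule that[OF o1 o2 uv(1) uv'(1) uv(2) uv'(2) uu vv]) (simp add: C12 uv uv')
qed

lemma part_is_piece:
  assumes XV: "X \<subseteq> V" and oX: "card (out X) = 4" and cX: "card X \<ge> 2"
    and cyc: "has_cycle (V - X) (induced_edges E (V - X))"
    and ends: "u \<in> X" "u' \<in> X" "u \<noteq> u'" "{u, v} \<in> out X" "{u', v'} \<in> out X"
    and net: "has_cycle X (induced_edges E X) \<Longrightarrow> twisted_net X (induced_edges E X)"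
  shows "net_piece X (induced_edges E X) u u'"
proof (cases "has_cycle X (induced_edges E X)")
  case True
  have "card X \<ge> 3" using has_cycle_card[OF True] XV finV finite_subset by blast
  then show ?thesis using corner[OF XV oX cyc] ends net[OF True] unfolding net_piece_def by blast
next
  case False
  then show ?thesis using single_side[OF XV oX cX] ends unfolding net_piece_def by blast
qed

lemma twisted_net_side:
  assumes nonsolid: "\<forall>A B. cyclic_k_cut 4 V E A B \<and> e \<subseteq> A \<longrightarrow> \<not> solid E B"
  shows "cyclic_k_cut 4 V E A B \<Longrightarrow> e \<subseteq> A \<Longrightarrow> twisted_net B (induced_edges E B)"
proof (induction "card B" arbitrary: A B rule: less_induct)
  case less
  have BV: "B \<subseteq> V" and A: "A = V - B" and cycA: "has_cycle A (induced_edges E A)"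
    and cut4: "card (cut_edges E A B) = 4"
    using less.prems unfolding cyclic_k_cut_def cyclic_cut_def is_partition_def by auto
  have "out B = cut_edges E A B" unfolding out_def A by (rule cut_edges_sym)
  then have oB: "card (out B) = 4" using cut4 by simp
  obtain B1 B2 where p: "is_partition B B1 B2" and cB1: "card B1 \<ge> 2" and cB2: "card B2 \<ge> 2"
    and cC: "card (cut_edges (induced_edges E B) B1 B2) = 2"
    using nonsolid less.prems unfolding solid_def by blast
  obtain u u' v v' where o: "card (out B1) = 4" "card (out B2) = 4"
    and ends: "u \<in> B1" "u' \<in> B1" "v \<in> B2" "v' \<in> B2" "u \<noteq> u'" "v \<noteq> v'"
    and C: "cut_edges (induced_edges E B) B1 B2 = {{u, v}, {u', v'}}"
    using nonsolid_split[OF BV oB _ p cB1 cB2 cC] cycA A by blast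
  have BU: "B = B1 \<union> B2" and BI: "B1 \<inter> B2 = {}" using p by (auto simp: is_partition_def)
  have p': "is_partition B B2 B1" using p by (auto simp: is_partition_def)
  have C1: "{{u, v}, {u', v'}} \<subseteq> out B1" using crossing_edges_out(1)[OF BV p] C by simp
  have C2: "{{v, u}, {v', u'}} \<subseteq> out B2"
    using crossing_edges_out(1)[OF BV p'] C cut_edges_sym[of _ B2 B1] by (simp add: insert_commute)
  text \<open>A proper part carrying a cycle is the far side of a smaller cyclic 4-edge-cut.\<close>
  have piece: "net_piece X (induced_edges E X) w w'"
    if X: "X \<subseteq> B" "Y \<subseteq> B" "X \<inter> Y = {}" "Y \<noteq> {}" "card (out X) = 4" "card X \<ge> 2"
      and w: "w \<in> X" "w' \<in> X" "w \<noteq> w'" "{w, x} \<in> out X" "{w', x'} \<in> out X" for X Y w w' x x'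
  proof -
    have XV: "X \<subseteq> V" using X BV by auto
    have cycX: "has_cycle (V - X) (induced_edges E (V - X))"
      by (rule has_cycle_mono[OF cycA]) (use X A in \<open>auto simp: induced_edges_def\<close>)
    have "X \<subset> B" using X by blast
    then have smaller: "card X < card B" using BV finV by (meson finite_subset psubset_card_mono)
    have "twisted_net X (induced_edges E X)" if cyc: "has_cycle X (induced_edges E X)"
    proof -
      have "cut_edges E (V - X) X = out X" unfolding out_def by (rule cut_edges_sym)
      then have "cyclic_k_cut 4 V E (V - X) X"
        using cycX cyc XV X(5) unfolding cyclic_k_cut_def cyclic_cut_def is_partition_def by auto
      moreover have "e \<subseteq> V - X" using less.prems(2) A X(1) by auto
      ultimately show ?thesis using less.hyps[OF smaller] by blast
    qed
    then show ?thesis using part_is_piece[OF XV X(5,6) cycX w] by blast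
  qed
  have "net_piece B1 (induced_edges E B1) u u'"
    using piece[of B1 B2 u u' v v'] BU BI cB2 o(1) cB1 ends C1 by fastforce
  moreover have "net_piece B2 (induced_edges E B2) v v'"
    using piece[of B2 B1 v v' u u'] BU BI cB1 o(2) cB2 ends C2 by fastforce
  ultimately have "twisted_net (B1 \<union> B2) (induced_edges E B1 \<union> induced_edges E B2 \<union> {{u, v}, {u', v'}})"
    using BI by (rule glue_pieces)
  then show ?case using induced_edges_partition[OF p, of E] C BU by simp
qed

end

text \<open>The induction only uses that no side away from e is solid.\<close>

theorem mainTheorem15:
  fixes V :: "'a set" and E :: "'a set set" and e :: "'a set"
  assumes "cubic V E"
    and "cyclically_4_edge_connected V E"
    and "e \<in> E"
    and "\<forall>A B. cyclic_k_cut 4 V E A B \<longrightarrow> e \<notin> cut_edges E A B"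
    and "\<forall>A B. cyclic_k_cut 4 V E A B \<and> e \<subseteq> A \<longrightarrow> \<not> solid E B"
  shows "\<forall>A B. cyclic_k_cut 4 V E A B \<and> e \<subseteq> A \<longrightarrow> twisted_net B (induced_edges E B)"
proof -
  interpret cyc4_cubic V E using assms(1,2) by unfold_locales
  show ?thesis using twisted_net_side[OF assms(5)] by blast
qed

end
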